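(* Let $(X,G)$ be a minimal continuous action and $m\in\mathbb{N}$, $m\geq 2$. Then $(X,G)$ is cover $m$-equicontinuous if and only if it is not compactly $m$-sensitive.
   Context: $G$ is a locally compact topological group acting continuously on a compact metric space $(X,d)$; minimal means every orbit is dense. For compact $K\subset G$, a set $A\subset G$ is $K$-covering if $G=KA$. A point $x\in X$ is a covering $m$-equicontinuity point if for every $\varepsilon>0$ there exist an open neighborhood $U$ of $x$ and a compact $K\subset G$ such that for all $x_1,\dots,x_m\in U$ the set $\{g\in G:\exists i\neq j,\ d(gx_i,gx_j)\leq\varepsilon\}$ is $K$-covering. $(X,G)$ is cover $m$-equicontinuous if every point is a covering $m$-equicontinuity point. $(X,G)$ is compactly $m$-sensitive if there exists $\varepsilon>0$ such that for every nonempty open $U\subset X$ and every compact $K\subset G$ there exist $x_1,\dots,x_m\in U$ and $h\in G$ with $Kh\subset\{g\in G: d(gx_i,gx_j)>\varepsilon\ \forall i\neq j\}$. *)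

theory Defs
  imports "HOL-Analysis.Analysis"
begin

text \<open>The group G is modelled as a type of class group_add (not necessarily commutative),
  written additively: the group product g*h is g + h, the identity is 0.
  X is modelled as a type of class metric_space, assumed compact.\<close>

definition topological_group :: "'g::{group_add,topological_space} itself \<Rightarrow> bool" where
  "topological_group _ \<longleftrightarrow>
     continuous_on (UNIV :: ('g \<times> 'g) set) (\<lambda>p. fst p + snd p) \<and>
     continuous_on (UNIV :: 'g set) uminus"

definition locally_compact_group :: "'g::{group_add,topological_space} itself \<Rightarrow> bool" where
  "locally_compact_group T \<longleftrightarrow> topological_group T \<and> locally compact (UNIV :: 'g set)"

definition continuous_action :: "('g::{group_add,topological_space} \<Rightarrow> 'x::topological_space \<Rightarrow> 'x) \<Rightarrow> bool" where
  "continuous_action act \<longleftrightarrow>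
     (\<forall>x. act 0 x = x) \<and> (\<forall>g h x. act (g + h) x = act g (act h x)) \<and>
     continuous_on UNIV (\<lambda>p. act (fst p) (snd p))"

definition minimal_action :: "('g \<Rightarrow> 'x::topological_space \<Rightarrow> 'x) \<Rightarrow> bool" where
  "minimal_action act \<longleftrightarrow> (\<forall>x. closure (range (\<lambda>g. act g x)) = UNIV)"

definition K_covering :: "'g::group_add set \<Rightarrow> 'g set \<Rightarrow> bool" where
  "K_covering K A \<longleftrightarrow> {k + a | k a. k \<in> K \<and> a \<in> A} = UNIV"

definition covering_equicont_point ::
  "nat \<Rightarrow> ('g::{group_add,topological_space} \<Rightarrow> 'x::metric_space \<Rightarrow> 'x) \<Rightarrow> 'x \<Rightarrow> bool" where
  "covering_equicont_point m act x \<longleftrightarrow>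
     (\<forall>\<epsilon>>0. \<exists>U K. open U \<and> x \<in> U \<and> compact K \<and>
        (\<forall>xs::nat \<Rightarrow> 'x. (\<forall>i<m. xs i \<in> U) \<longrightarrow>
           K_covering K {g. \<exists>i<m. \<exists>j<m. i \<noteq> j \<and> dist (act g (xs i)) (act g (xs j)) \<le> \<epsilon>}))"

definition cover_equicontinuous ::
  "nat \<Rightarrow> ('g::{group_add,topological_space} \<Rightarrow> 'x::metric_space \<Rightarrow> 'x) \<Rightarrow> bool" where
  "cover_equicontinuous m act \<longleftrightarrow> (\<forall>x. covering_equicont_point m act x)"

definition compactly_sensitive ::
  "nat \<Rightarrow> ('g::{group_add,topological_space} \<Rightarrow> 'x::metric_space \<Rightarrow> 'x) \<Rightarrow> bool" where
  "compactly_sensitive m act \<longleftrightarrow>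
     (\<exists>\<epsilon>>0. \<forall>U K. open U \<and> U \<noteq> {} \<and> compact K \<longrightarrow>
        (\<exists>(xs::nat \<Rightarrow> 'x) h. (\<forall>i<m. xs i \<in> U) \<and>
           (\<lambda>k. k + h) ` K \<subseteq> {g. \<forall>i<m. \<forall>j<m. i \<noteq> j \<longrightarrow> dist (act g (xs i)) (act g (xs j)) > \<epsilon>}))"

end

theory Submission
  imports Defs
begin

text \<open>A set A is K-covering exactly when no right translate of -K misses A; sensitivity asks
  for a right translate of K inside the complement of the set of times at which some pair of
  the m points is \<open>\<epsilon>\<close>-close. So the two notions are dual once K is replaced by -K,
  which is again compact. For the passage from an open set U to an arbitrary point x,
  minimality gives g with g x \<in> U, and the set of close times of a tuple in the preimage
  of U under g is a right translate of that of its image in U, hence still covering.\<close>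

definition close_pair_times ::
  "nat \<Rightarrow> ('g \<Rightarrow> 'x::metric_space \<Rightarrow> 'x) \<Rightarrow> (nat \<Rightarrow> 'x) \<Rightarrow> real \<Rightarrow> 'g set" where
  "close_pair_times m act xs \<epsilon> =
     {g. \<exists>i<m. \<exists>j<m. i \<noteq> j \<and> dist (act g (xs i)) (act g (xs j)) \<le> \<epsilon>}"

lemma separated_times_eq_Compl_close_pair_times:
  "{g. \<forall>i<m. \<forall>j<m. i \<noteq> j \<longrightarrow> dist (act g (xs i)) (act g (xs j)) > \<epsilon>} =
     - close_pair_times m act xs \<epsilon>"
  by (fastforce simp: close_pair_times_def not_le)

lemma K_covering_iff_translates_not_in_Compl:
  fixes K A :: "'g::group_add set"
  shows "K_covering K A \<longleftrightarrow> (\<forall>h. \<not> (\<lambda>k. k + h) ` uminus ` K \<subseteq> - A)"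
proof -
  have "h \<in> {k + a | k a. k \<in> K \<and> a \<in> A} \<longleftrightarrow> \<not> (\<lambda>k. k + h) ` uminus ` K \<subseteq> - A" for h
  proof -
    have "h = k + a \<longleftrightarrow> a = - k + h" for k a
      by (metis add.assoc add_minus_cancel)
    then show ?thesis by blast
  qed
  then show ?thesis
    unfolding K_covering_def by blast
qed

lemma K_covering_uminus_iff:
  fixes K A :: "'g::group_add set"
  shows "K_covering (uminus ` K) A \<longleftrightarrow> (\<forall>h. \<not> (\<lambda>k. k + h) ` K \<subseteq> - A)"
  by (simp add: K_covering_iff_translates_not_in_Compl image_image)

lemma K_covering_right_translate:
  fixes K A :: "'g::group_add set"
  assumes "K_covering K A"
  shows "K_covering K ((\<lambda>a. a + g) ` A)"
proof -
  have "h \<in> {k + b | k b. k \<in> K \<and> b \<in> (\<lambda>a. a + g) ` A}" for h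
  proof -
    from assms obtain k a where "k \<in> K" "a \<in> A" "h - g = k + a"
      unfolding K_covering_def by blast
    then have "h = k + (a + g)"
      by (metis add.assoc diff_add_cancel)
    with \<open>k \<in> K\<close> \<open>a \<in> A\<close> show ?thesis by blast
  qed
  then show ?thesis
    unfolding K_covering_def by blast
qed

lemma compact_uminus_image:
  fixes K :: "'g::{group_add,topological_space} set"
  assumes "topological_group TYPE('g)" and "compact K"
  shows "compact (uminus ` K)"
  using assms by (auto simp: topological_group_def intro: compact_continuous_image continuous_on_subset)

lemma continuous_action_continuous_on_act:
  assumes "continuous_action act"
  shows "continuous_on UNIV (act g)"
proof -
  have "continuous_on UNIV ((\<lambda>p. act (fst p) (snd p)) \<circ> Pair g)"
    using assms unfolding continuous_action_def
    by (intro continuous_on_compose continuous_intros) (auto intro: continuous_on_subset)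
  then show ?thesis by (simp add: o_def)
qed

lemma close_pair_times_act:
  fixes act :: "'g::{group_add,topological_space} \<Rightarrow> 'x::metric_space \<Rightarrow> 'x"
  assumes "continuous_action act"
  shows "close_pair_times m act xs \<epsilon> =
           (\<lambda>a. a + g) ` close_pair_times m act (\<lambda>i. act g (xs i)) \<epsilon>"
proof -
  have "act (b - g) (act g y) = act b y" for b y
    using assms by (metis continuous_action_def diff_add_cancel)
  then have "b - g \<in> close_pair_times m act (\<lambda>i. act g (xs i)) \<epsilon> \<longleftrightarrow>
               b \<in> close_pair_times m act xs \<epsilon>" for b
    by (simp add: close_pair_times_def)
  moreover have "b \<in> (\<lambda>a. a + g) ` S \<longleftrightarrow> b - g \<in> S" for b and S :: "'g set"
    using image_eqI[of b "\<lambda>a. a + g" "b - g" S] by auto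
  ultimately show ?thesis
    by blast
qed

lemma minimal_action_orbit_meets_open:
  assumes "minimal_action act" and "open U" and "U \<noteq> {}"
  obtains g where "act g x \<in> U"
proof -
  have "U \<inter> closure (range (\<lambda>g. act g x)) \<noteq> {}"
    using assms by (simp add: minimal_action_def)
  then have "U \<inter> range (\<lambda>g. act g x) \<noteq> {}"
    using open_Int_closure_eq_empty[OF \<open>open U\<close>] by blast
  then show thesis
    using that by blast
qed

lemma not_compactly_sensitive_if_covering_equicont_point:
  fixes act :: "'g::{group_add,topological_space} \<Rightarrow> 'x::metric_space \<Rightarrow> 'x"
  assumes "topological_group TYPE('g)" and "covering_equicont_point m act x"
  shows "\<not> compactly_sensitive m act"
proof
  assume "compactly_sensitive m act"
  then obtain \<epsilon> where "\<epsilon> > 0" and sensitive: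
    "\<forall>U K. open U \<and> U \<noteq> {} \<and> compact K \<longrightarrow> (\<exists>xs h. (\<forall>i<m. xs i \<in> U) \<and>
       (\<lambda>k. k + h) ` K \<subseteq> - close_pair_times m act xs \<epsilon>)"
    unfolding compactly_sensitive_def separated_times_eq_Compl_close_pair_times by (elim exE conjE)
  from assms(2) \<open>\<epsilon> > 0\<close> obtain U K where "open U" "x \<in> U" "compact K" and covering:
    "\<forall>xs. (\<forall>i<m. xs i \<in> U) \<longrightarrow> K_covering K (close_pair_times m act xs \<epsilon>)"
    unfolding covering_equicont_point_def close_pair_times_def[symmetric] by meson
  have "compact (uminus ` K)"
    using assms(1) \<open>compact K\<close> by (rule compact_uminus_image)
  moreover have "U \<noteq> {}"
    using \<open>x \<in> U\<close> by blast
  ultimately obtain xs h where "\<forall>i<m. xs i \<in> U"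
    and separated: "(\<lambda>k. k + h) ` uminus ` K \<subseteq> - close_pair_times m act xs \<epsilon>"
    using sensitive \<open>open U\<close> by meson
  then have "\<not> K_covering K (close_pair_times m act xs \<epsilon>)"
    unfolding K_covering_iff_translates_not_in_Compl by meson
  with covering \<open>\<forall>i<m. xs i \<in> U\<close> show False
    by meson
qed

lemma not_compactly_sensitive_open_witness:
  assumes "\<not> compactly_sensitive m act" and "\<epsilon> > 0"
  obtains U K where "open U" "U \<noteq> {}" "compact K"
    and "\<And>xs. \<forall>i<m. xs i \<in> U \<Longrightarrow> K_covering (uminus ` K) (close_pair_times m act xs \<epsilon>)"
proof -
  from assms obtain U K where "open U" "U \<noteq> {}" "compact K" and insensitive:
    "\<not> (\<exists>xs h. (\<forall>i<m. xs i \<in> U) \<and> (\<lambda>k. k + h) ` K \<subseteq> - close_pair_times m act xs \<epsilon>)"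
    unfolding compactly_sensitive_def separated_times_eq_Compl_close_pair_times by meson
  have "K_covering (uminus ` K) (close_pair_times m act xs \<epsilon>)" if "\<forall>i<m. xs i \<in> U" for xs
    unfolding K_covering_uminus_iff using insensitive that by meson
  with \<open>open U\<close> \<open>U \<noteq> {}\<close> \<open>compact K\<close> show thesis
    by (rule that)
qed

lemma covering_equicont_point_if_not_compactly_sensitive:
  fixes act :: "'g::{group_add,topological_space} \<Rightarrow> 'x::metric_space \<Rightarrow> 'x"
  assumes "topological_group TYPE('g)" and "continuous_action act" and "minimal_action act"
    and "\<not> compactly_sensitive m act"
  shows "covering_equicont_point m act x"
  unfolding covering_equicont_point_def close_pair_times_def[symmetric]
proof (intro allI impI)
  fix \<epsilon> :: real
  assume "\<epsilon> > 0"
  obtain U K where "open U" "U \<noteq> {}" "compact K" and covering: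
    "\<And>xs. \<forall>i<m. xs i \<in> U \<Longrightarrow> K_covering (uminus ` K) (close_pair_times m act xs \<epsilon>)"
    using not_compactly_sensitive_open_witness[OF assms(4) \<open>\<epsilon> > 0\<close>] by metis
  obtain g where "act g x \<in> U"
    using assms(3) \<open>open U\<close> \<open>U \<noteq> {}\<close> by (rule minimal_action_orbit_meets_open)
  have "open (act g -` U)"
    using continuous_action_continuous_on_act[OF assms(2)] \<open>open U\<close>
    by (simp add: continuous_on_open_vimage)
  moreover have "K_covering (uminus ` K) (close_pair_times m act xs \<epsilon>)"
    if "\<forall>i<m. xs i \<in> act g -` U" for xs
  proof -
    have "K_covering (uminus ` K) (close_pair_times m act (\<lambda>i. act g (xs i)) \<epsilon>)"
      using covering that by simp
    then show ?thesis
      unfolding close_pair_times_act[OF assms(2), of m xs \<epsilon> g]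
      by (rule K_covering_right_translate)
  qed
  moreover have "x \<in> act g -` U"
    using \<open>act g x \<in> U\<close> by simp
  ultimately show "\<exists>U K. open U \<and> x \<in> U \<and> compact K \<and>
      (\<forall>xs. (\<forall>i<m. xs i \<in> U) \<longrightarrow> K_covering K (close_pair_times m act xs \<epsilon>))"
    using compact_uminus_image[OF assms(1) \<open>compact K\<close>] by meson
qed

theorem proposition5p3:
  fixes act :: "'g::{group_add,t2_space} \<Rightarrow> 'x::metric_space \<Rightarrow> 'x"
    and m :: nat
  assumes "locally_compact_group TYPE('g)"
    and "compact (UNIV :: 'x set)"
    and "continuous_action act"
    and "minimal_action act"
    and "m \<ge> 2"
  shows "cover_equicontinuous m act \<longleftrightarrow> \<not> compactly_sensitive m act"
proof -
  have "topological_group TYPE('g)"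
    using assms(1) by (simp add: locally_compact_group_def)
  then show ?thesis
    using not_compactly_sensitive_if_covering_equicont_point
      covering_equicont_point_if_not_compactly_sensitive[OF _ assms(3,4)]
    unfolding cover_equicontinuous_def by blast
qed

end
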